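(* Let $L$ and ${}^*L=e^{\sigma(x)}L+\beta$ be as in the context and $\tau=e^{\sigma}\,{}^*L/L$. Then $${}^*S_{hijk}=\tau S_{hijk}-\frac{\tau}{2\,{}^*L}\big[h_{ik}H_{jh}+h_{jh}H_{ik}-h_{hk}H_{ij}-h_{ij}H_{hk}\big].$$
   Context: $M$ is a smooth manifold of dimension $n$ with local coordinates $(x^i)$ and induced fiber coordinates $(y^i)$ on $TM$. $L(x,y)$ is a Finsler metric: positive and smooth for $y\neq0$, positively homogeneous of degree 1 in $y$, with positive definite fundamental tensor $g_{ij}=\frac12\frac{\partial^2L^2}{\partial y^i\partial y^j}$ and inverse $g^{ij}$. $\sigma(x)$ is a smooth function on $M$ and $\beta(x,y)=b_i(x)y^i$ is a 1-form; the conformal $\beta$-change is ${}^*L=e^{\sigma(x)}L+\beta$, assumed to be again a Finsler metric. Notation: $l_i=\partial L/\partial y^i$, $l^i=g^{ij}l_j$, $h_{ij}=g_{ij}-l_il_j$, $c_{ijk}=\frac12\partial g_{ij}/\partial y^k$, $c_i{}^r{}_j=g^{rk}c_{ijk}$, $b^i=g^{ij}b_j$, $m_i=b_i-\frac{\beta}{L}l_i$, $m^i=g^{ij}m_j$, $m^2=m_im^i$, $H_{ij}=c_i{}^r{}_jm_r+\frac{1}{2\,{}^*L}m_im_j+\frac{1}{4\,{}^*L}h_{ij}m^2$, $S_{hijk}=c_{ijr}c_h{}^r{}_k-c_{ikr}c_h{}^r{}_j$. Quantities built from ${}^*L$ by the same formulas (using ${}^*g_{ij}$ and its inverse ${}^*g^{ij}$,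 e.g. ${}^*c_h{}^r{}_k={}^*g^{rs}\,{}^*c_{hsk}$) are denoted with a left asterisk. *)

theory Defs
  imports "HOL-Analysis.Analysis"
begin

definition dpd :: "'a::real_normed_vector \<Rightarrow> ('a \<Rightarrow> real) \<Rightarrow> 'a \<Rightarrow> real" where
  "dpd v f y = deriv (\<lambda>t. f (y + t *\<^sub>R v)) 0"

definition smooth_on :: "'a::euclidean_space set \<Rightarrow> ('a \<Rightarrow> real) \<Rightarrow> bool" where
  "smooth_on S f \<longleftrightarrow>
     (\<forall>vs. set vs \<subseteq> Basis \<longrightarrow> (\<forall>y\<in>S. (foldr dpd vs f) differentiable (at y)))"

definition pd :: "'n::finite \<Rightarrow> (real^'n \<Rightarrow> real) \<Rightarrow> real^'n \<Rightarrow> real" where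
  "pd i F y = dpd (axis i 1) F y"

text \<open>Quantities built from a fibre function F = L(x, .).\<close>
definition gt :: "(real^'n::finite \<Rightarrow> real) \<Rightarrow> 'n \<Rightarrow> 'n \<Rightarrow> real^'n \<Rightarrow> real" where
  "gt F i j y = 1/2 * pd i (pd j (\<lambda>z. (F z)^2)) y"

definition gi :: "(real^'n::finite \<Rightarrow> real) \<Rightarrow> 'n \<Rightarrow> 'n \<Rightarrow> real^'n \<Rightarrow> real" where
  "gi F i j y = matrix_inv (\<chi> a b. gt F a b y) $ i $ j"

definition ll :: "(real^'n::finite \<Rightarrow> real) \<Rightarrow> 'n \<Rightarrow> real^'n \<Rightarrow> real" where
  "ll F i y = pd i F y"

definition hh :: "(real^'n::finite \<Rightarrow> real) \<Rightarrow> 'n \<Rightarrow> 'n \<Rightarrow> real^'n \<Rightarrow> real" where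
  "hh F i j y = gt F i j y - ll F i y * ll F j y"

definition ct :: "(real^'n::finite \<Rightarrow> real) \<Rightarrow> 'n \<Rightarrow> 'n \<Rightarrow> 'n \<Rightarrow> real^'n \<Rightarrow> real" where
  "ct F i j k y = 1/2 * pd k (\<lambda>z. gt F i j z) y"

definition cu :: "(real^'n::finite \<Rightarrow> real) \<Rightarrow> 'n \<Rightarrow> 'n \<Rightarrow> 'n \<Rightarrow> real^'n \<Rightarrow> real" where
  "cu F i r j y = (\<Sum>s\<in>UNIV. gi F r s y * ct F i s j y)"

definition SS :: "(real^'n::finite \<Rightarrow> real) \<Rightarrow> 'n \<Rightarrow> 'n \<Rightarrow> 'n \<Rightarrow> 'n \<Rightarrow> real^'n \<Rightarrow> real" where
  "SS F h i j k y = (\<Sum>r\<in>UNIV. ct F i j r y * cu F h r k y - ct F i k r y * cu F h r j y)"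

text \<open>m_i = b_i - (beta/L) l_i, with beta = b . y\<close>
definition mm :: "(real^'n::finite \<Rightarrow> real) \<Rightarrow> real^'n \<Rightarrow> 'n \<Rightarrow> real^'n \<Rightarrow> real" where
  "mm F b i y = b $ i - ((b \<bullet> y) / F y) * ll F i y"

definition mu :: "(real^'n::finite \<Rightarrow> real) \<Rightarrow> real^'n \<Rightarrow> 'n \<Rightarrow> real^'n \<Rightarrow> real" where
  "mu F b i y = (\<Sum>j\<in>UNIV. gi F i j y * mm F b j y)"

definition msq :: "(real^'n::finite \<Rightarrow> real) \<Rightarrow> real^'n \<Rightarrow> real^'n \<Rightarrow> real" where
  "msq F b y = (\<Sum>i\<in>UNIV. mm F b i y * mu F b i y)"

definition HH :: "(real^'n::finite \<Rightarrow> real) \<Rightarrow> real^'n \<Rightarrow> (real^'n \<Rightarrow> real)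
                   \<Rightarrow> 'n \<Rightarrow> 'n \<Rightarrow> real^'n \<Rightarrow> real" where
  "HH F b sL i j y = (\<Sum>r\<in>UNIV. cu F i r j y * mm F b r y)
      + mm F b i y * mm F b j y / (2 * sL y) + hh F i j y * msq F b y / (4 * sL y)"

definition finsler_on :: "(real^'n::finite) set \<Rightarrow> (real^'n \<Rightarrow> real^'n \<Rightarrow> real) \<Rightarrow> bool" where
  "finsler_on U L \<longleftrightarrow>
     smooth_on (U \<times> (UNIV - {0})) (\<lambda>(x, y). L x y)
   \<and> (\<forall>x\<in>U. \<forall>y. y \<noteq> 0 \<longrightarrow> L x y > 0)
   \<and> (\<forall>x\<in>U. \<forall>y. \<forall>c::real. c > 0 \<longrightarrow> L x (c *\<^sub>R y) = c * L x y)
   \<and> (\<forall>x\<in>U. \<forall>y. y \<noteq> 0 \<longrightarrow>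
        (\<forall>v::real^'n. v \<noteq> 0 \<longrightarrow> (\<Sum>i\<in>UNIV. \<Sum>j\<in>UNIV. gt (L x) i j y * v $ i * v $ j) > 0))"

end

(*
  At a fixed direction y everything is expressed through the derivatives l = dL, A = d^2 L and
  T = d^3 L of the fibre function at y: g = l l^T + L A and 2 c_ijk = A_ki l_j + l_i A_kj + l_k A_ij
  + L T_kij, while homogeneity gives the Euler relations l.y = L, A y = 0 and T y = -A.
  For *L = e^sigma L + beta the derivatives are e^sigma l + b, e^sigma A and e^sigma T, whence
  *c_ijk = tau c_ijk + (e^sigma / 2L)(h_ij m_k + h_jk m_i + h_ki m_j).  Both Cartan tensors
  annihilate y, and on covectors annihilating y the inverse metrics differ only by the factor
  tau, since g and *g share the angular part A.  Expanding *S_hijk bilinearly then gives the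
  formula.
*)

theory Submission
  imports Defs
begin

section \<open>Partial derivatives in the fibre\<close>

lemma has_real_derivative_along_line:
  fixes f :: "'a::real_normed_vector \<Rightarrow> real"
  assumes "f differentiable (at (p + t *\<^sub>R v))"
  shows "((\<lambda>s. f (p + s *\<^sub>R v)) has_real_derivative frechet_derivative f (at (p + t *\<^sub>R v)) v) (at t)"
proof -
  let ?f' = "frechet_derivative f (at (p + t *\<^sub>R v))"
  have f: "(f has_derivative ?f') (at (p + t *\<^sub>R v))"
    using assms frechet_derivative_works by blast
  have g: "((\<lambda>s. p + s *\<^sub>R v) has_derivative (\<lambda>h. h *\<^sub>R v)) (at t)"
    by (auto intro!: derivative_eq_intros)
  have "((\<lambda>s. f (p + s *\<^sub>R v)) has_derivative (\<lambda>h. ?f' (h *\<^sub>R v))) (at t)"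
    using diff_chain_at[OF g f] by (simp add: o_def)
  moreover have "(\<lambda>h. ?f' (h *\<^sub>R v)) = (\<lambda>h. ?f' v * h)"
    using linear_scale[OF has_derivative_linear[OF f]] by (auto simp: mult.commute)
  ultimately show ?thesis by (simp add: has_field_derivative_def)
qed

lemma pd_eq_frechet_derivative:
  assumes "f differentiable (at z)"
  shows "pd i f z = frechet_derivative f (at z) (axis i 1)"
  using has_real_derivative_along_line[of f z 0 "axis i 1"] assms
  unfolding pd_def dpd_def by (simp add: DERIV_imp_deriv)

lemma pd_has_real_derivative:
  assumes "f differentiable (at (p + t *\<^sub>R axis i 1))"
  shows "((\<lambda>s. f (p + s *\<^sub>R axis i 1)) has_real_derivative pd i f (p + t *\<^sub>R axis i 1)) (at t)"
  using has_real_derivative_along_line[OF assms] pd_eq_frechet_derivative[OF assms] by simp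

lemma pd_eqI:
  assumes "((\<lambda>t. f (z + t *\<^sub>R axis i 1)) has_real_derivative D) (at 0)"
  shows "pd i f z = D"
  using assms unfolding pd_def dpd_def by (rule DERIV_imp_deriv)

lemma pd_add:
  assumes "f differentiable (at z)" "g differentiable (at z)"
  shows "pd i (\<lambda>w. f w + g w) z = pd i f z + pd i g z"
  using DERIV_add[OF pd_has_real_derivative pd_has_real_derivative, of f z 0 i g] assms
  by (intro pd_eqI) simp

lemma pd_mult:
  assumes "f differentiable (at z)" "g differentiable (at z)"
  shows "pd i (\<lambda>w. f w * g w) z = pd i f z * g z + f z * pd i g z"
  using DERIV_mult[OF pd_has_real_derivative pd_has_real_derivative, of f z 0 i g] assms
  by (intro pd_eqI) (simp add: mult.commute)

lemma pd_cmult: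
  assumes "f differentiable (at z)"
  shows "pd i (\<lambda>w. c * f w) z = c * pd i f z"
  using DERIV_cmult[OF pd_has_real_derivative, of f z 0 i c] assms
  by (intro pd_eqI) simp

lemma pd_const: "pd i (\<lambda>w. c) z = 0"
  by (rule pd_eqI) auto

lemma pd_inner_left: "pd i (\<lambda>w. c \<bullet> w) z = c $ i"
proof (rule pd_eqI)
  have "((\<lambda>t. c \<bullet> z + t * c $ i) has_real_derivative c $ i) (at 0)"
    by (auto intro!: derivative_eq_intros)
  then show "((\<lambda>t. c \<bullet> (z + t *\<^sub>R axis i 1)) has_real_derivative c $ i) (at 0)"
    by (simp add: inner_add_right cart_eq_inner_axis)
qed

lemma pd_cong:
  assumes "open S" "z \<in> S" "\<And>w. w \<in> S \<Longrightarrow> f w = g w"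
  shows "pd i f z = pd i g z"
  unfolding pd_def dpd_def
proof (rule deriv_cong_ev)
  have "open ((\<lambda>t::real. z + t *\<^sub>R axis i 1) -` S)"
    by (rule continuous_open_vimage) (auto intro!: continuous_intros assms)
  then have "\<forall>\<^sub>F t in nhds 0. z + t *\<^sub>R axis i 1 \<in> S"
    using assms(2) eventually_nhds_in_open by fastforce
  then show "\<forall>\<^sub>F t in nhds 0. f (z + t *\<^sub>R axis i 1) = g (z + t *\<^sub>R axis i 1)"
    by eventually_elim (use assms in auto)
qed simp

lemma smooth_on_differentiable:
  assumes "smooth_on S f" "z \<in> S"
  shows "f differentiable (at z)"
  using assms unfolding smooth_on_def by (metis empty_subsetI foldr_Nil id_apply list.set(1))

lemma smooth_on_pd:
  fixes f :: "real^'n \<Rightarrow> real"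
  assumes "smooth_on S f"
  shows "smooth_on S (pd i f)"
  unfolding smooth_on_def
proof (intro allI impI ballI)
  fix vs :: "(real^'n) list" and z assume "set vs \<subseteq> Basis" "z \<in> S"
  moreover have "set (vs @ [axis i 1]) \<subseteq> Basis"
    using \<open>set vs \<subseteq> Basis\<close> by (auto simp: Basis_vec_def)
  ultimately have "foldr dpd (vs @ [axis i 1]) f differentiable (at z)"
    using assms unfolding smooth_on_def by blast
  moreover have "pd i f = dpd (axis i 1) f"
    by (simp add: fun_eq_iff pd_def)
  ultimately show "foldr dpd vs (pd i f) differentiable (at z)"
    by (simp only: foldr_append foldr.simps o_def id_def)
qed

lemma foldr_dpd_Pair:
  "foldr dpd (map (Pair 0) vs) f (x, w) = foldr dpd vs (\<lambda>w. f (x, w)) w"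
proof (induction vs arbitrary: w)
  case (Cons v vs)
  have "\<And>t. (x, w) + t *\<^sub>R (0, v) = (x, w + t *\<^sub>R v)"
    by simp
  with Cons.IH show ?case
    by (simp add: dpd_def)
qed simp

lemma smooth_on_Pair:
  fixes f :: "'a::euclidean_space \<times> 'b::euclidean_space \<Rightarrow> real"
  assumes "smooth_on (U \<times> S) f" "x \<in> U"
  shows "smooth_on S (\<lambda>w. f (x, w))"
  unfolding smooth_on_def
proof (intro allI impI ballI)
  fix vs :: "'b list" and z assume "set vs \<subseteq> Basis" "z \<in> S"
  moreover have "set (map (Pair 0) vs) \<subseteq> Basis"
    using \<open>set vs \<subseteq> Basis\<close> by (auto simp: Basis_prod_def zero_prod_def)
  ultimately have "foldr dpd (map (Pair 0) vs) f differentiable (at (x, z))"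
    using assms unfolding smooth_on_def by (meson mem_Sigma_iff)
  then have "(foldr dpd (map (Pair 0) vs) f \<circ> Pair x) differentiable (at z)"
    by (intro differentiable_chain_at) (auto intro!: derivative_intros simp: differentiable_def)
  then show "foldr dpd vs (\<lambda>w. f (x, w)) differentiable (at z)"
    by (simp add: o_def foldr_dpd_Pair)
qed

lemma mixed_difference_mean_value:
  fixes f :: "real^'n \<Rightarrow> real"
  assumes S: "ball z r \<subseteq> S" and s: "s > 0" "2 * s < r"
    and f: "\<forall>w\<in>S. f differentiable (at w)" and fi: "\<forall>w\<in>S. pd i f differentiable (at w)"
  obtains \<xi> \<eta> where "0 < \<xi>" "\<xi> < s" "0 < \<eta>" "\<eta> < s"
    "f (z + s *\<^sub>R axis i 1 + s *\<^sub>R axis j 1) - f (z + s *\<^sub>R axis i 1) - f (z + s *\<^sub>R axis j 1) + f z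
     = s * s * pd j (pd i f) (z + \<xi> *\<^sub>R axis i 1 + \<eta> *\<^sub>R axis j 1)"
proof -
  define a :: "real^'n" where "a = axis i 1"
  define b :: "real^'n" where "b = axis j 1"
  have inS: "z + t *\<^sub>R a + u *\<^sub>R b \<in> S" if "\<bar>t\<bar> \<le> s" "\<bar>u\<bar> \<le> s" for t u
  proof -
    have "norm (t *\<^sub>R a + u *\<^sub>R b) \<le> \<bar>t\<bar> + \<bar>u\<bar>"
      using norm_triangle_ineq[of "t *\<^sub>R a" "u *\<^sub>R b"] by (simp add: a_def b_def)
    then have "dist (z + (t *\<^sub>R a + u *\<^sub>R b)) z < r"
      using that s by (simp add: dist_norm)
    then have "z + (t *\<^sub>R a + u *\<^sub>R b) \<in> ball z r"
      by (simp add: dist_commute)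
    then show ?thesis using S by (auto simp: add.assoc)
  qed
  define \<phi> where "\<phi> t = f (z + s *\<^sub>R b + t *\<^sub>R a) - f (z + t *\<^sub>R a)" for t
  define \<phi>' where "\<phi>' t = pd i f (z + s *\<^sub>R b + t *\<^sub>R a) - pd i f (z + t *\<^sub>R a)" for t
  have "(\<phi> has_real_derivative \<phi>' t) (at t)" if "0 \<le> t" "t \<le> s" for t
    unfolding \<phi>_def [abs_def] \<phi>'_def a_def
    using inS[of t s] inS[of t 0] that s f
    by (intro DERIV_diff pd_has_real_derivative) (auto simp: a_def add_ac)
  then obtain \<xi> where \<xi>: "0 < \<xi>" "\<xi> < s" "\<phi> s - \<phi> 0 = s * \<phi>' \<xi>"
    using MVT2[of 0 s \<phi> \<phi>'] s by auto
  define \<psi> where "\<psi> u = pd i f (z + \<xi> *\<^sub>R a + u *\<^sub>R b)" for u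
  have "(\<psi> has_real_derivative pd j (pd i f) (z + \<xi> *\<^sub>R a + u *\<^sub>R b)) (at u)"
    if "0 \<le> u" "u \<le> s" for u
    unfolding \<psi>_def [abs_def] b_def
    using inS[of \<xi> u] that \<xi> fi by (intro pd_has_real_derivative) (auto simp: b_def)
  then obtain \<eta> where \<eta>: "0 < \<eta>" "\<eta> < s"
    "\<psi> s - \<psi> 0 = s * pd j (pd i f) (z + \<xi> *\<^sub>R a + \<eta> *\<^sub>R b)"
    using MVT2[of 0 s \<psi> "\<lambda>u. pd j (pd i f) (z + \<xi> *\<^sub>R a + u *\<^sub>R b)"] s by auto
  have "\<phi>' \<xi> = \<psi> s - \<psi> 0"
    unfolding \<phi>'_def \<psi>_def by (simp add: add_ac)
  moreover have "\<phi> s - \<phi> 0 = f (z + s *\<^sub>R a + s *\<^sub>R b) - f (z + s *\<^sub>R a) - f (z + s *\<^sub>R b) + f z"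
    unfolding \<phi>_def by (simp add: add_ac)
  ultimately show ?thesis
    using that \<xi> \<eta> by (simp add: a_def b_def)
qed

lemma pd_commute:
  fixes f :: "real^'n \<Rightarrow> real"
  assumes S: "open S" "z \<in> S"
    and f: "\<forall>w\<in>S. f differentiable (at w)"
    and fi: "\<forall>w\<in>S. pd i f differentiable (at w)" and fj: "\<forall>w\<in>S. pd j f differentiable (at w)"
    and cont: "continuous (at z) (pd j (pd i f))" "continuous (at z) (pd i (pd j f))"
  shows "pd i (pd j f) z = pd j (pd i f) z"
proof (rule ccontr)
  assume ne: "pd i (pd j f) z \<noteq> pd j (pd i f) z"
  define \<epsilon> where "\<epsilon> = \<bar>pd i (pd j f) z - pd j (pd i f) z\<bar> / 2"
  have "\<epsilon> > 0" using ne by (simp add: \<epsilon>_def)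
  obtain r where r: "r > 0" "ball z r \<subseteq> S" using S open_contains_ball by blast
  obtain d1 where d1: "d1 > 0" "\<And>p. dist p z < d1 \<Longrightarrow> dist (pd j (pd i f) p) (pd j (pd i f) z) < \<epsilon>"
    using cont(1) \<open>\<epsilon> > 0\<close> unfolding continuous_at_eps_delta by blast
  obtain d2 where d2: "d2 > 0" "\<And>p. dist p z < d2 \<Longrightarrow> dist (pd i (pd j f) p) (pd i (pd j f) z) < \<epsilon>"
    using cont(2) \<open>\<epsilon> > 0\<close> unfolding continuous_at_eps_delta by blast
  define s where "s = min r (min d1 d2) / 3"
  have s: "s > 0" "2 * s < r" "2 * s < d1" "2 * s < d2"
    using r d1 d2 by (auto simp: s_def)
  have near: "dist (z + t *\<^sub>R axis a 1 + u *\<^sub>R axis b 1) z < 2 * s"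
    if "0 < t" "t < s" "0 < u" "u < s" for t u and a b :: 'n
    using norm_triangle_ineq[of "t *\<^sub>R axis a 1" "u *\<^sub>R (axis b 1 :: real^'n)"] that
    by (simp add: dist_norm)
  obtain \<xi> \<eta> where A: "0 < \<xi>" "\<xi> < s" "0 < \<eta>" "\<eta> < s"
    "f (z + s *\<^sub>R axis i 1 + s *\<^sub>R axis j 1) - f (z + s *\<^sub>R axis i 1) - f (z + s *\<^sub>R axis j 1) + f z
     = s * s * pd j (pd i f) (z + \<xi> *\<^sub>R axis i 1 + \<eta> *\<^sub>R axis j 1)"
    using mixed_difference_mean_value[OF r(2) s(1,2) f fi] by blast
  obtain \<xi>' \<eta>' where B: "0 < \<xi>'" "\<xi>' < s" "0 < \<eta>'" "\<eta>' < s"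
    "f (z + s *\<^sub>R axis j 1 + s *\<^sub>R axis i 1) - f (z + s *\<^sub>R axis j 1) - f (z + s *\<^sub>R axis i 1) + f z
     = s * s * pd i (pd j f) (z + \<xi>' *\<^sub>R axis j 1 + \<eta>' *\<^sub>R axis i 1)"
    using mixed_difference_mean_value[OF r(2) s(1,2) f fj] by blast
  let ?p = "z + \<xi> *\<^sub>R axis i 1 + \<eta> *\<^sub>R axis j 1" and ?q = "z + \<xi>' *\<^sub>R axis j 1 + \<eta>' *\<^sub>R axis i 1"
  have "f (z + s *\<^sub>R axis i 1 + s *\<^sub>R axis j 1) = f (z + s *\<^sub>R axis j 1 + s *\<^sub>R axis i 1)"
    by (simp add: add_ac)
  then have "s * s * pd j (pd i f) ?p = s * s * pd i (pd j f) ?q"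
    using A(5) B(5) by linarith
  then have "pd j (pd i f) ?p = pd i (pd j f) ?q"
    using s(1) by simp
  moreover have "\<bar>pd j (pd i f) ?p - pd j (pd i f) z\<bar> < \<epsilon>"
    using d1(2) near[of \<xi> \<eta> i j] A s by (force simp: dist_real_def)
  moreover have "\<bar>pd i (pd j f) ?q - pd i (pd j f) z\<bar> < \<epsilon>"
    using d2(2) near[of \<xi>' \<eta>' j i] B s by (force simp: dist_real_def)
  ultimately show False
    using abs_triangle_ineq[of "pd j (pd i f) ?p - pd j (pd i f) z" "pd i (pd j f) z - pd j (pd i f) ?p"]
    by (simp add: \<epsilon>_def abs_minus_commute)
qed

lemma smooth_on_pd_commute:
  fixes f :: "real^'n \<Rightarrow> real"
  assumes "open S" "smooth_on S f" "z \<in> S"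
  shows "pd i (pd j f) z = pd j (pd i f) z"
  using assms
  by (intro pd_commute ballI differentiable_imp_continuous_within)
     (auto intro: smooth_on_differentiable smooth_on_pd)

lemma pd_positively_homogeneous:
  fixes f :: "real^'n \<Rightarrow> real"
  assumes hom: "\<And>r z. r > 0 \<Longrightarrow> f (r *\<^sub>R z) = r powr k * f z"
    and f: "f differentiable (at w)" and r: "r > 0"
  shows "pd i f (r *\<^sub>R w) = r powr (k - 1) * pd i f w"
proof (rule pd_eqI)
  let ?v = "(1 / r) *\<^sub>R axis i (1::real)"
  have "((\<lambda>t. f (w + t *\<^sub>R ?v)) has_real_derivative frechet_derivative f (at w) ?v) (at 0)"
    using has_real_derivative_along_line[of f w 0 ?v] f by simp
  moreover have "frechet_derivative f (at w) ?v = pd i f w / r"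
    using linear_scale[OF has_derivative_linear[OF frechet_derivative_works[THEN iffD1, OF f]]]
    by (simp add: pd_eq_frechet_derivative[OF f])
  ultimately have "((\<lambda>t. r powr k * f (w + t *\<^sub>R ?v)) has_real_derivative r powr k * (pd i f w / r)) (at 0)"
    by (intro DERIV_cmult) auto
  moreover have "r *\<^sub>R w + t *\<^sub>R axis i 1 = r *\<^sub>R (w + t *\<^sub>R ?v)" for t
    using r by (simp add: algebra_simps)
  ultimately show "((\<lambda>t. f (r *\<^sub>R w + t *\<^sub>R axis i 1)) has_real_derivative r powr (k - 1) * pd i f w) (at 0)"
    using r by (simp add: hom powr_diff)
qed

lemma euler_homogeneous:
  fixes f :: "real^'n \<Rightarrow> real"
  assumes f: "f differentiable (at y)" and hom: "\<And>r. r > 0 \<Longrightarrow> f (r *\<^sub>R y) = r powr k * f y"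
  shows "(\<Sum>i\<in>UNIV. y $ i * pd i f y) = k * f y"
proof -
  let ?f' = "frechet_derivative f (at y)"
  have lin: "linear ?f'"
    using has_derivative_linear frechet_derivative_works f by blast
  have "((\<lambda>t. (1 + t) powr k * f y) has_real_derivative k * f y) (at 0)"
    by (auto intro!: derivative_eq_intros)
  then have "((\<lambda>t. f (y + t *\<^sub>R y)) has_real_derivative k * f y) (at 0)"
  proof (rule has_field_derivative_transform_within_open[where S = "{-1<..}"])
    fix t :: real assume "t \<in> {-1<..}"
    then show "(1 + t) powr k * f y = f (y + t *\<^sub>R y)"
      using hom[of "1 + t"] by (simp add: algebra_simps)
  qed auto
  moreover have "((\<lambda>t. f (y + t *\<^sub>R y)) has_real_derivative ?f' y) (at 0)"
    using has_real_derivative_along_line[of f y 0 y] f by simp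
  ultimately have "k * f y = ?f' y"
    by (rule DERIV_unique)
  also have "\<dots> = ?f' (\<Sum>i\<in>UNIV. y $ i *\<^sub>R axis i 1)"
    using basis_expansion[of y] by (simp add: scalar_mult_eq_scaleR)
  also have "\<dots> = (\<Sum>i\<in>UNIV. y $ i * pd i f y)"
    by (simp add: linear_sum[OF lin] linear_scale[OF lin] pd_eq_frechet_derivative[OF f])
  finally show ?thesis ..
qed

lemma euler_identities:
  fixes F :: "real^'n \<Rightarrow> real"
  assumes F: "smooth_on (UNIV - {0}) F" and hom: "\<And>r z. r > 0 \<Longrightarrow> F (r *\<^sub>R z) = r * F z"
    and y: "y \<noteq> 0"
  shows "(\<Sum>i\<in>UNIV. y $ i * pd i F y) = F y"
    and "(\<Sum>i\<in>UNIV. y $ i * pd i (pd j F) y) = 0"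
    and "(\<Sum>i\<in>UNIV. y $ i * pd i (pd j (pd k F)) y) = - pd j (pd k F) y"
proof -
  have diff: "G differentiable (at y)" if "smooth_on (UNIV - {0}) G" for G :: "real^'n \<Rightarrow> real"
    using smooth_on_differentiable[OF that] y by blast
  have hom1: "F (r *\<^sub>R z) = r powr 1 * F z" if "r > 0" for r z
    using hom that by simp
  have hom0: "pd j F (r *\<^sub>R z) = r powr 0 * pd j F z" if "r > 0" for r z j
  proof (cases "z = 0")
    case False
    then show ?thesis
      using pd_positively_homogeneous[OF hom1 _ that] smooth_on_differentiable[OF F] by simp
  qed (use that in simp)
  show "(\<Sum>i\<in>UNIV. y $ i * pd i F y) = F y"
    using euler_homogeneous[OF diff[OF F] hom1] by simp
  show "(\<Sum>i\<in>UNIV. y $ i * pd i (pd j F) y) = 0"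
    using euler_homogeneous[OF diff[OF smooth_on_pd[OF F]] hom0] by simp
  have "pd j (pd k F) (r *\<^sub>R y) = r powr (- 1) * pd j (pd k F) y" if "r > 0" for r
    using pd_positively_homogeneous[OF hom0 diff[OF smooth_on_pd[OF F]] that] by simp
  from euler_homogeneous[OF diff[OF smooth_on_pd[OF smooth_on_pd[OF F]]] this]
  show "(\<Sum>i\<in>UNIV. y $ i * pd i (pd j (pd k F)) y) = - pd j (pd k F) y"
    by simp
qed

section \<open>Fundamental and Cartan tensors through derivatives of the fibre function\<close>

lemma gt_eq_pd:
  fixes G :: "real^'n \<Rightarrow> real"
  assumes "open S" "smooth_on S G" "w \<in> S"
  shows "gt G i j w = pd i G w * pd j G w + G w * pd i (pd j G) w"
proof -
  have d: "G differentiable (at z)" "pd j G differentiable (at z)" if "z \<in> S" for z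
    using that assms(2) by (auto intro: smooth_on_differentiable smooth_on_pd)
  have "pd i (pd j (\<lambda>z. (G z)\<^sup>2)) w = pd i (\<lambda>z. 2 * (G z * pd j G z)) w"
    using assms(1,3) d by (intro pd_cong) (auto simp: power2_eq_square pd_mult)
  also have "\<dots> = 2 * (pd i G w * pd j G w + G w * pd i (pd j G) w)"
    using d[OF assms(3)] by (simp add: pd_cmult pd_mult differentiable_mult)
  finally show ?thesis
    by (simp add: gt_def)
qed

lemma ct_eq_pd:
  fixes G :: "real^'n \<Rightarrow> real"
  assumes "open S" "smooth_on S G" "w \<in> S"
  shows "ct G i j k w = (pd k (pd i G) w * pd j G w + pd i G w * pd k (pd j G) w
           + pd k G w * pd i (pd j G) w + G w * pd k (pd i (pd j G)) w) / 2"
proof -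
  have d: "G differentiable (at w)" "pd i G differentiable (at w)" "pd j G differentiable (at w)"
      "pd i (pd j G) differentiable (at w)"
    using assms(2,3) by (auto intro: smooth_on_differentiable smooth_on_pd)
  have "pd k (gt G i j) w = pd k (\<lambda>z. pd i G z * pd j G z + G z * pd i (pd j G) z) w"
    using assms gt_eq_pd by (intro pd_cong) auto
  also have "\<dots> = pd k (pd i G) w * pd j G w + pd i G w * pd k (pd j G) w
           + pd k G w * pd i (pd j G) w + G w * pd k (pd i (pd j G)) w"
    using d by (simp add: pd_add pd_mult differentiable_mult)
  finally show ?thesis
    by (simp add: ct_def)
qed

text \<open>l, A and T play the role of the first three derivatives of G at y.\<close>
definition jet_tensors :: "(real^'n::finite \<Rightarrow> real) \<Rightarrow> real^'n \<Rightarrow> real^'n \<Rightarrow> real^'n^'n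
    \<Rightarrow> ('n \<Rightarrow> 'n \<Rightarrow> 'n \<Rightarrow> real) \<Rightarrow> bool" where
  "jet_tensors G y l A T \<longleftrightarrow>
     (\<forall>i. ll G i y = l $ i)
   \<and> (\<forall>i j. gt G i j y = l $ i * l $ j + G y * A $ i $ j)
   \<and> (\<forall>i j k. ct G i j k y
          = (A $ k $ i * l $ j + l $ i * A $ k $ j + l $ k * A $ i $ j + G y * T k i j) / 2)"

lemma jet_tensors_pd:
  fixes G :: "real^'n \<Rightarrow> real"
  assumes "open S" "smooth_on S G" "y \<in> S"
  shows "jet_tensors G y (\<chi> i. pd i G y) (\<chi> i j. pd i (pd j G) y) (\<lambda>i j k. pd i (pd j (pd k G)) y)"
  using gt_eq_pd[OF assms] ct_eq_pd[OF assms] by (simp add: jet_tensors_def ll_def)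

lemma jet_tensors_ct_swap:
  assumes jet: "jet_tensors G y l A T" and A: "\<And>i j. A $ i $ j = A $ j $ i"
    and T: "\<And>i j k. T i j k = T j i k" "\<And>i j k. T i j k = T i k j"
  shows "ct G j i k y = ct G i j k y" and "ct G i k j y = ct G i j k y"
proof -
  have ct: "\<And>i j k. ct G i j k y
      = (A $ k $ i * l $ j + l $ i * A $ k $ j + l $ k * A $ i $ j + G y * T k i j) / 2"
    using jet by (simp add: jet_tensors_def)
  have "T k j i = T k i j" "T j i k = T k i j"
    using T by metis+
  then show "ct G j i k y = ct G i j k y" "ct G i k j y = ct G i j k y"
    using A[of k i] A[of k j] A[of j i] A[of i k] A[of j k]
    by (simp_all add: ct algebra_simps)
qed

lemma
  fixes F :: "real^'n \<Rightarrow> real"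
  assumes S: "open S" "w \<in> S" and F: "smooth_on S F"
  shows pd_beta_change: "pd i (\<lambda>z. e * F z + c \<bullet> z) w = e * pd i F w + c $ i"
    and pd_pd_beta_change: "pd i (pd j (\<lambda>z. e * F z + c \<bullet> z)) w = e * pd i (pd j F) w"
    and pd_pd_pd_beta_change:
      "pd i (pd j (pd k (\<lambda>z. e * F z + c \<bullet> z))) w = e * pd i (pd j (pd k F)) w"
proof -
  have pd1: "pd i (\<lambda>z. e * F z + c \<bullet> z) z = e * pd i F z + c $ i" if "z \<in> S" for i z
    using smooth_on_differentiable[OF F that]
    by (simp add: pd_add pd_cmult pd_inner_left bounded_linear_inner_right
        bounded_linear_imp_differentiable)
  then show "pd i (\<lambda>z. e * F z + c \<bullet> z) w = e * pd i F w + c $ i"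
    using S by blast
  have pd2: "pd i (pd j (\<lambda>z. e * F z + c \<bullet> z)) z = e * pd i (pd j F) z" if "z \<in> S" for i j z
  proof -
    have "pd i (pd j (\<lambda>z. e * F z + c \<bullet> z)) z = pd i (\<lambda>z. e * pd j F z + c $ j) z"
      using S(1) that pd1 by (rule pd_cong)
    also have "\<dots> = e * pd i (pd j F) z"
      using smooth_on_differentiable[OF smooth_on_pd[OF F] that]
      by (simp add: pd_add pd_cmult pd_const)
    finally show ?thesis .
  qed
  then show "pd i (pd j (\<lambda>z. e * F z + c \<bullet> z)) w = e * pd i (pd j F) w"
    using S by blast
  have "pd i (pd j (pd k (\<lambda>z. e * F z + c \<bullet> z))) w = pd i (\<lambda>z. e * pd j (pd k F) z) w"
    using S pd2 by (rule pd_cong)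
  also have "\<dots> = e * pd i (pd j (pd k F)) w"
    using smooth_on_differentiable[OF smooth_on_pd[OF smooth_on_pd[OF F]] S(2)] by (simp add: pd_cmult)
  finally show "pd i (pd j (pd k (\<lambda>z. e * F z + c \<bullet> z))) w = e * pd i (pd j (pd k F)) w" .
qed

section \<open>Inverse matrices\<close>

lemma
  fixes M :: "real^'n^'n"
  assumes "invertible M"
  shows matrix_inv_right: "M ** matrix_inv M = mat 1"
    and matrix_inv_left: "matrix_inv M ** M = mat 1"
proof -
  have "\<exists>M'. M ** M' = mat 1 \<and> M' ** M = mat 1"
    using assms unfolding invertible_def by blast
  then have "M ** matrix_inv M = mat 1 \<and> matrix_inv M ** M = mat 1"
    unfolding matrix_inv_def by (rule someI_ex)
  then show "M ** matrix_inv M = mat 1" "matrix_inv M ** M = mat 1"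
    by auto
qed

lemma matrix_inv_mult_vector_eq:
  fixes M :: "real^'n^'n"
  assumes "invertible M" "M *v z = v"
  shows "matrix_inv M *v v = z"
  using assms matrix_inv_left[OF assms(1)]
  by (metis matrix_vector_mul_assoc matrix_vector_mul_lid)

lemma symmetric_matrix_inv:
  fixes M :: "real^'n^'n"
  assumes "transpose M = M" "invertible M"
  shows "transpose (matrix_inv M) = matrix_inv M"
proof -
  have "transpose (matrix_inv M) ** M = mat 1"
    using matrix_inv_right[OF assms(2)] assms(1) by (metis matrix_transpose_mul transpose_mat)
  have "transpose (matrix_inv M) = transpose (matrix_inv M) ** (M ** matrix_inv M)"
    by (simp add: matrix_inv_right[OF assms(2)] matrix_mul_rid)
  also have "\<dots> = matrix_inv M"
    using \<open>transpose (matrix_inv M) ** M = mat 1\<close> by (simp add: matrix_mul_assoc matrix_mul_lid)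
  finally show ?thesis .
qed

lemma invertible_if_positive_definite:
  fixes M :: "real^'n^'n"
  assumes "\<And>v. v \<noteq> 0 \<Longrightarrow> (\<Sum>i\<in>UNIV. \<Sum>j\<in>UNIV. M $ i $ j * v $ i * v $ j) > 0"
  shows "invertible M"
proof -
  have "x = 0" if "M *v x = 0" for x
  proof -
    have "(\<Sum>i\<in>UNIV. \<Sum>j\<in>UNIV. M $ i $ j * x $ i * x $ j) = x \<bullet> (M *v x)"
      by (simp add: inner_vec_def matrix_vector_mult_def sum_distrib_left mult_ac)
    then show ?thesis
      using assms[of x] that by force
  qed
  then show ?thesis
    using matrix_left_invertible_ker invertible_left_inverse by blast
qed

text \<open>Two metrics sharing the angular part A (which annihilates y) but with different radial
  parts have proportional inverses on covectors annihilating y.\<close>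
lemma inner_matrix_inv_rescale:
  fixes g g' A :: "real^'n^'n" and p q y v w :: "real^'n"
  assumes g: "invertible g" "\<And>u. g *v u = (p \<bullet> u) *\<^sub>R p + a *\<^sub>R (A *v u)"
    and g': "invertible g'" "\<And>u. g' *v u = (q \<bullet> u) *\<^sub>R q + a' *\<^sub>R (A *v u)"
    and A: "transpose A = A" "A *v y = 0"
    and py: "p \<bullet> y \<noteq> 0" and qy: "q \<bullet> y \<noteq> 0" and a': "a' \<noteq> 0"
    and vy: "v \<bullet> y = 0" and wy: "w \<bullet> y = 0"
  shows "w \<bullet> (matrix_inv g' *v v) = a / a' * (w \<bullet> (matrix_inv g *v v))"
proof -
  define z where "z = matrix_inv g *v v"
  have "g *v z = v"
    by (simp add: z_def matrix_vector_mul_assoc matrix_inv_right[OF g(1)])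
  then have gz: "(p \<bullet> z) *\<^sub>R p + a *\<^sub>R (A *v z) = v"
    by (simp add: g(2))
  have "(A *v z) \<bullet> y = z \<bullet> (A *v y)"
    by (metis A(1) dot_lmul_matrix inner_commute transpose_transpose vector_transpose_matrix)
  then have "(p \<bullet> z) * (p \<bullet> y) = 0"
    using arg_cong[OF gz, of "\<lambda>u. u \<bullet> y"] A(2) vy by (simp add: inner_add_left)
  then have Az: "a *\<^sub>R (A *v z) = v"
    using gz py by simp
  define z' where "z' = (a / a') *\<^sub>R z - ((a / a') * (q \<bullet> z) / (q \<bullet> y)) *\<^sub>R y"
  have "q \<bullet> z' = 0"
    using qy by (simp add: z'_def inner_diff_right)
  moreover have "A *v z' = (a / a') *\<^sub>R (A *v z)"
    by (simp add: z'_def matrix_vector_mult_diff_distrib matrix_vector_mult_scaleR A(2))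
  ultimately have "g' *v z' = v"
    using a' Az by (simp add: g'(2))
  then have "matrix_inv g' *v v = z'"
    by (rule matrix_inv_mult_vector_eq[OF g'(1)])
  then show ?thesis
    using wy by (simp add: z'_def z_def inner_diff_right)
qed

definition fundamental_matrix :: "(real^'n::finite \<Rightarrow> real) \<Rightarrow> real^'n \<Rightarrow> real^'n^'n" where
  "fundamental_matrix G y = (\<chi> i j. gt G i j y)"

definition cartan_vec :: "(real^'n::finite \<Rightarrow> real) \<Rightarrow> 'n \<Rightarrow> 'n \<Rightarrow> real^'n \<Rightarrow> real^'n" where
  "cartan_vec G i j y = (\<chi> k. ct G i j k y)"

lemma cu_eq_matrix_inv:
  assumes "\<And>k. ct G i k j y = ct G i j k y"
  shows "cu G i r j y = (matrix_inv (fundamental_matrix G y) *v cartan_vec G i j y) $ r"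
  by (simp add: cu_def gi_def fundamental_matrix_def cartan_vec_def matrix_vector_mult_def assms)

lemma SS_eq_cartan_vec:
  assumes "\<And>i j k. ct G i k j y = ct G i j k y"
  shows "SS G h i j k y =
      cartan_vec G i j y \<bullet> (matrix_inv (fundamental_matrix G y) *v cartan_vec G h k y)
    - cartan_vec G i k y \<bullet> (matrix_inv (fundamental_matrix G y) *v cartan_vec G h j y)"
  unfolding SS_def cu_eq_matrix_inv[of G, OF assms]
  by (simp add: inner_vec_def sum_subtractf cartan_vec_def)

lemma fundamental_matrix_mult_jet:
  assumes "jet_tensors G y l A T"
  shows "fundamental_matrix G y *v u = (l \<bullet> u) *\<^sub>R l + G y *\<^sub>R (A *v u)"
  using assms
  by (simp add: vec_eq_iff jet_tensors_def fundamental_matrix_def matrix_vector_mult_def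
      inner_vec_def algebra_simps sum.distrib sum_distrib_left)

lemma symmetric_fundamental_matrix_jet:
  assumes "jet_tensors G y l A T" "transpose A = A"
  shows "transpose (fundamental_matrix G y) = fundamental_matrix G y"
  using assms
  by (simp add: vec_eq_iff jet_tensors_def fundamental_matrix_def transpose_def mult.commute)

section \<open>The conformal beta-change at one direction\<close>

text \<open>F and sL are the fibre functions of L and of its conformal beta-change e L + beta at the
  direction y, and l, A, T are the first three derivatives of F at y.\<close>
locale conformal_beta_jet =
  fixes F sL :: "real^'n::finite \<Rightarrow> real" and y c l :: "real^'n" and A :: "real^'n^'n"
    and T :: "'n \<Rightarrow> 'n \<Rightarrow> 'n \<Rightarrow> real" and e :: real
  assumes F_pos: "F y > 0" and e_pos: "e > 0" and sL_pos: "sL y > 0"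
    and sL_y: "sL y = e * F y + c \<bullet> y"
    and l_y: "l \<bullet> y = F y" and A_y: "A *v y = 0" and A_sym: "\<And>i j. A $ i $ j = A $ j $ i"
    and T_swap: "\<And>i j k. T i j k = T j i k" "\<And>i j k. T i j k = T i k j"
    and T_y: "\<And>j k. (\<Sum>i\<in>UNIV. y $ i * T i j k) = - A $ j $ k"
    and jet_F: "jet_tensors F y l A T"
    and jet_sL: "jet_tensors sL y (e *\<^sub>R l + c) (e *\<^sub>R A) (\<lambda>i j k. e * T i j k)"
    and invertible_F: "invertible (fundamental_matrix F y)"
    and invertible_sL: "invertible (fundamental_matrix sL y)"
begin

definition \<tau> :: real where "\<tau> = e * sL y / F y"

definition \<kappa> :: real where "\<kappa> = e / (2 * F y)"

definition m :: "real^'n" where "m = c - (c \<bullet> y / F y) *\<^sub>R l"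

definition h_row :: "'n \<Rightarrow> real^'n" where "h_row i = F y *\<^sub>R A $ i"

definition cartan_correction :: "'n \<Rightarrow> 'n \<Rightarrow> real^'n" where
  "cartan_correction i j = (F y * A $ i $ j) *\<^sub>R m + m $ i *\<^sub>R h_row j + m $ j *\<^sub>R h_row i"

definition Q :: "real^'n \<Rightarrow> real^'n \<Rightarrow> real" where
  "Q u v = u \<bullet> (matrix_inv (fundamental_matrix F y) *v v)"

abbreviation cv :: "'n \<Rightarrow> 'n \<Rightarrow> real^'n" where "cv i j \<equiv> cartan_vec F i j y"

abbreviation scv :: "'n \<Rightarrow> 'n \<Rightarrow> real^'n" where "scv i j \<equiv> cartan_vec sL i j y"

lemma A_transpose: "transpose A = A"
  by (simp add: vec_eq_iff transpose_def A_sym)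

lemma ct_F:
  "ct F i j k y = (A $ i $ k * l $ j + l $ i * A $ j $ k + l $ k * A $ i $ j + F y * T k i j) / 2"
  using jet_F A_sym[of k i] A_sym[of k j] by (simp add: jet_tensors_def)

lemma ct_sL: "ct sL i j k y = (e * A $ i $ k * (e * l $ j + c $ j) + (e * l $ i + c $ i) * e * A $ j $ k
    + (e * l $ k + c $ k) * e * A $ i $ j + sL y * e * T k i j) / 2"
  using jet_sL A_sym[of k i] A_sym[of k j] by (simp add: jet_tensors_def)

lemma ct_F_swap: "ct F j i k y = ct F i j k y" "ct F i k j y = ct F i j k y"
  using jet_tensors_ct_swap[OF jet_F A_sym T_swap] by blast+

lemma cartan_vec_F_swap: "cv j i = cv i j"
  by (simp add: vec_eq_iff cartan_vec_def ct_F_swap)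

lemma ct_sL_swap: "ct sL i k j y = ct sL i j k y"
  by (rule jet_tensors_ct_swap[OF jet_sL]) (use A_sym T_swap in auto)

lemma hh_F: "hh F i j y = F y * A $ i $ j"
  using jet_F by (simp add: jet_tensors_def hh_def)

lemma mm_F: "mm F c i y = m $ i"
  using jet_F by (simp add: jet_tensors_def mm_def m_def)

lemma \<tau>_pos: "\<tau> > 0"
  using F_pos sL_pos e_pos by (simp add: \<tau>_def)

lemma \<tau>_div: "\<tau> / (2 * sL y) = \<kappa>"
  using sL_pos by (simp add: \<tau>_def \<kappa>_def)

lemma fundamental_matrix_F_mult: "fundamental_matrix F y *v u = (l \<bullet> u) *\<^sub>R l + F y *\<^sub>R (A *v u)"
  by (rule fundamental_matrix_mult_jet[OF jet_F])

lemma Q_commute: "Q u v = Q v u"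
proof -
  have "transpose (matrix_inv (fundamental_matrix F y)) = matrix_inv (fundamental_matrix F y)"
    using symmetric_fundamental_matrix_jet[OF jet_F A_transpose] invertible_F
    by (rule symmetric_matrix_inv)
  then show ?thesis
    by (metis Q_def dot_lmul_matrix inner_commute vector_transpose_matrix)
qed

lemma Q_add_left: "Q (u + v) w = Q u w + Q v w"
  and Q_add_right: "Q u (v + w) = Q u v + Q u w"
  and Q_scaleR_left: "Q (a *\<^sub>R u) v = a * Q u v"
  and Q_scaleR_right: "Q u (a *\<^sub>R v) = a * Q u v"
  by (simp_all add: Q_def inner_add_left inner_add_right matrix_vector_right_distrib
      matrix_vector_mult_scaleR)

lemma Q_h_row: "Q u (h_row i) = u $ i - l $ i / F y * (u \<bullet> y)"
proof -
  have "fundamental_matrix F y *v y = F y *\<^sub>R l"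
    by (simp add: fundamental_matrix_F_mult l_y A_y)
  then have "F y *\<^sub>R (matrix_inv (fundamental_matrix F y) *v l) = y"
    using matrix_inv_mult_vector_eq[OF invertible_F, of y "F y *\<^sub>R l"]
    by (simp add: matrix_vector_mult_scaleR)
  then have inv_l: "matrix_inv (fundamental_matrix F y) *v l = (1 / F y) *\<^sub>R y"
    using F_pos by (metis less_irrefl scaleR_left_imp_eq scaleR_one scaleR_scaleR
        nonzero_mult_div_cancel_left times_divide_eq_right)
  have "A *v axis i 1 = A $ i"
    by (simp add: vec_eq_iff matrix_vector_mult_basis column_def A_sym)
  then have "h_row i = fundamental_matrix F y *v axis i 1 - l $ i *\<^sub>R l"
    by (simp add: h_row_def fundamental_matrix_F_mult inner_axis)
  then have "matrix_inv (fundamental_matrix F y) *v h_row i = axis i 1 - (l $ i / F y) *\<^sub>R y"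
    by (simp add: matrix_vector_mult_diff_distrib matrix_vector_mul_assoc
        matrix_inv_left[OF invertible_F] matrix_vector_mult_scaleR inv_l)
  then show ?thesis
    by (simp add: Q_def inner_diff_right inner_axis)
qed

lemma h_row_orthogonal: "h_row i \<bullet> y = 0"
  using A_y by (simp add: h_row_def matrix_vector_mul_component[symmetric])

lemma m_orthogonal: "m \<bullet> y = 0"
  using l_y F_pos by (simp add: m_def inner_diff_left)

lemma cartan_vec_F:
  "cv i j = (1/2) *\<^sub>R (l $ j *\<^sub>R A $ i + l $ i *\<^sub>R A $ j + A $ i $ j *\<^sub>R l + F y *\<^sub>R (\<chi> k. T k i j))"
  by (simp add: vec_eq_iff cartan_vec_def ct_F algebra_simps)

lemma cartan_vec_F_orthogonal: "cv i j \<bullet> y = 0"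
proof -
  have "(\<chi> k. T k i j) \<bullet> y = - A $ i $ j"
    using T_y[of i j] by (simp add: inner_vec_def mult.commute)
  then show ?thesis
    using A_y l_y
    by (simp add: cartan_vec_F inner_add_left matrix_vector_mul_component[symmetric])
qed

lemma cartan_vec_sL: "scv i j = \<tau> *\<^sub>R cv i j + \<kappa> *\<^sub>R cartan_correction i j"
proof -
  have "ct sL i j k y = \<tau> * ct F i j k y
      + \<kappa> * (F y * A $ i $ j * m $ k + m $ i * (F y * A $ j $ k) + m $ j * (F y * A $ i $ k))" for k
    using F_pos by (simp add: ct_sL ct_F \<tau>_def \<kappa>_def m_def sL_y field_simps)
  then show ?thesis
    by (simp add: vec_eq_iff cartan_vec_def cartan_correction_def h_row_def algebra_simps)
qed

lemma cartan_vec_sL_orthogonal: "scv i j \<bullet> y = 0"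
  by (simp add: cartan_vec_sL cartan_correction_def inner_add_left cartan_vec_F_orthogonal
      m_orthogonal h_row_orthogonal)

lemma SS_F: "SS F h i j k y = Q (cv i j) (cv h k) - Q (cv i k) (cv h j)"
  unfolding Q_def by (rule SS_eq_cartan_vec) (rule ct_F_swap)

lemma SS_sL: "SS sL h i j k y = (Q (scv i j) (scv h k) - Q (scv i k) (scv h j)) / \<tau>"
proof -
  have sL_mult: "fundamental_matrix sL y *v u
      = ((e *\<^sub>R l + c) \<bullet> u) *\<^sub>R (e *\<^sub>R l + c) + (e * sL y) *\<^sub>R (A *v u)" for u
    by (simp add: fundamental_matrix_mult_jet[OF jet_sL] scaleR_matrix_vector_assoc[symmetric]
        mult.commute)
  have "(e *\<^sub>R l + c) \<bullet> y = sL y"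
    by (simp add: inner_add_left l_y sL_y)
  then have rescale: "u \<bullet> (matrix_inv (fundamental_matrix sL y) *v v) = Q u v / \<tau>"
    if "u \<bullet> y = 0" "v \<bullet> y = 0" for u v
    using inner_matrix_inv_rescale[OF invertible_F fundamental_matrix_F_mult invertible_sL sL_mult
        A_transpose A_y _ _ _ that(2,1)] F_pos sL_pos e_pos l_y
    by (simp add: Q_def \<tau>_def)
  show ?thesis
    using SS_eq_cartan_vec[of sL y h i j k] ct_sL_swap
    by (simp add: rescale cartan_vec_sL_orthogonal diff_divide_distrib)
qed

lemma HH_F:
  "HH F c sL i j y = Q (cv i j) m + m $ i * m $ j / (2 * sL y) + hh F i j y * Q m m / (4 * sL y)"
proof -
  have "(\<Sum>r\<in>UNIV. cu F i r j y * mm F c r y) = Q m (cv i j)"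
    by (simp add: cu_eq_matrix_inv ct_F_swap mm_F Q_def inner_vec_def mult.commute)
  moreover have "msq F c y = Q m m"
    by (simp add: msq_def mu_def mm_F gi_def Q_def inner_vec_def matrix_vector_mult_def
        fundamental_matrix_def)
  ultimately show ?thesis
    by (simp add: HH_def mm_F Q_commute)
qed

lemma Q_cartan_vec_h_row: "Q (cv i j) (h_row k) = ct F i j k y"
  by (simp add: Q_h_row cartan_vec_F_orthogonal) (simp add: cartan_vec_def)

lemma Q_h_row_h_row: "Q (h_row i) (h_row j) = F y * A $ i $ j"
  by (simp add: Q_h_row h_row_orthogonal) (simp add: h_row_def)

lemma Q_m_h_row: "Q m (h_row i) = m $ i"
  by (simp add: Q_h_row m_orthogonal)

lemma Q_cartan_vec_correction:
  "Q (cv a b) (cartan_correction h d)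
     = F y * A $ h $ d * Q (cv a b) m + m $ h * ct F a b d y + m $ d * ct F a b h y"
  by (simp add: cartan_correction_def Q_add_right Q_scaleR_right Q_cartan_vec_h_row)

lemma Q_correction_correction:
  "Q (cartan_correction a b) (cartan_correction h d) = F y * (F y * A $ a $ b * A $ h $ d * Q m m
     + A $ a $ b * (m $ h * m $ d + m $ d * m $ h) + A $ h $ d * (m $ a * m $ b + m $ b * m $ a)
     + m $ a * (m $ h * A $ b $ d + m $ d * A $ b $ h) + m $ b * (m $ h * A $ a $ d + m $ d * A $ a $ h))"
  by (simp add: cartan_correction_def Q_add_left Q_add_right Q_scaleR_left Q_scaleR_right
      Q_h_row_h_row Q_m_h_row Q_commute[of "h_row _" m] ring_distribs mult_ac)

lemma Q_cartan_vec_sL: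
  "Q (scv a b) (scv h d) = \<tau> * \<tau> * Q (cv a b) (cv h d)
     + \<tau> * \<kappa> * (Q (cv a b) (cartan_correction h d) + Q (cv h d) (cartan_correction a b))
     + \<kappa> * \<kappa> * Q (cartan_correction a b) (cartan_correction h d)"
  unfolding cartan_vec_sL
  by (simp add: Q_add_left Q_add_right Q_scaleR_left Q_scaleR_right
      Q_commute[of "cartan_correction a b" "cv h d"] ring_distribs mult_ac)

theorem SS_conformal_beta_change:
  "SS sL h i j k y = e * sL y / F y * SS F h i j k y
     - e * sL y / F y / (2 * sL y) *
        (hh F i k y * HH F c sL j h y + hh F j h y * HH F c sL i k y
         - hh F h k y * HH F c sL i j y - hh F i j y * HH F c sL h k y)"
proof -
  have rescale: "(\<tau> * \<tau> * a + \<tau> * \<kappa> * b + \<kappa> * \<kappa> * d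
        - (\<tau> * \<tau> * a' + \<tau> * \<kappa> * b' + \<kappa> * \<kappa> * d')) / \<tau>
      = \<tau> * (a - a') + \<kappa> * (b - b' + (d - d') / (2 * sL y))" for a b d a' b' d'
    using \<tau>_pos sL_pos by (simp add: \<tau>_div[symmetric] field_simps)
  have "ct F i k j y = ct F i j k y" "ct F h j i y = ct F i j h y" "ct F h k j y = ct F h j k y"
    "ct F h k i y = ct F i k h y"
    by (metis ct_F_swap)+
  moreover have "cv j h = cv h j" "A $ h $ j = A $ j $ h" "A $ k $ j = A $ j $ k"
    "A $ k $ h = A $ h $ k"
    by (simp_all add: cartan_vec_F_swap A_sym)
  ultimately have bracket:
    "Q (cv i j) (cartan_correction h k) + Q (cv h k) (cartan_correction i j)
       - (Q (cv i k) (cartan_correction h j) + Q (cv h j) (cartan_correction i k))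
       + (Q (cartan_correction i j) (cartan_correction h k)
          - Q (cartan_correction i k) (cartan_correction h j)) / (2 * sL y)
     = - (hh F i k y * HH F c sL j h y + hh F j h y * HH F c sL i k y
          - hh F h k y * HH F c sL i j y - hh F i j y * HH F c sL h k y)"
    unfolding Q_cartan_vec_correction Q_correction_correction HH_F hh_F
    using sL_pos by (simp add: field_simps)
  show ?thesis
    unfolding \<tau>_def[symmetric] \<tau>_div SS_sL Q_cartan_vec_sL rescale SS_F bracket
    by (simp add: algebra_simps)
qed

end

lemma finsler_on_fibre:
  assumes "finsler_on U L" "x \<in> U"
  shows "smooth_on (UNIV - {0}) (L x)"
    and "\<And>r z. r > 0 \<Longrightarrow> L x (r *\<^sub>R z) = r * L x z"
    and "\<And>y. y \<noteq> 0 \<Longrightarrow> L x y > 0"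
    and "\<And>y. y \<noteq> 0 \<Longrightarrow> invertible (fundamental_matrix (L x) y)"
proof -
  show "smooth_on (UNIV - {0}) (L x)"
    using smooth_on_Pair[of U "UNIV - {0}" "\<lambda>(x, y). L x y" x] assms
    by (simp add: finsler_on_def)
  show "\<And>r z. r > 0 \<Longrightarrow> L x (r *\<^sub>R z) = r * L x z" "\<And>y. y \<noteq> 0 \<Longrightarrow> L x y > 0"
    using assms by (simp_all add: finsler_on_def)
  show "invertible (fundamental_matrix (L x) y)" if "y \<noteq> 0" for y
    using assms that unfolding finsler_on_def fundamental_matrix_def
    by (intro invertible_if_positive_definite) simp
qed

lemma conformal_beta_jet_pd:
  fixes F :: "real^'n \<Rightarrow> real"
  assumes F: "smooth_on (UNIV - {0}) F" and sL: "smooth_on (UNIV - {0}) (\<lambda>z. e * F z + c \<bullet> z)"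
    and hom: "\<And>r z. r > 0 \<Longrightarrow> F (r *\<^sub>R z) = r * F z" and y: "y \<noteq> 0"
    and pos: "F y > 0" "e > 0" "e * F y + c \<bullet> y > 0"
    and inv: "invertible (fundamental_matrix F y)"
      "invertible (fundamental_matrix (\<lambda>z. e * F z + c \<bullet> z) y)"
  shows "conformal_beta_jet F (\<lambda>z. e * F z + c \<bullet> z) y c (\<chi> i. pd i F y) (\<chi> i j. pd i (pd j F) y)
           (\<lambda>i j k. pd i (pd j (pd k F)) y) e"
proof -
  let ?S = "UNIV - {0} :: (real^'n) set"
  have S: "open ?S" "y \<in> ?S"
    using y by (auto simp: open_Diff)
  have hessian_sym: "pd i (pd j F) z = pd j (pd i F) z" if "z \<in> ?S" for i j z
    using smooth_on_pd_commute[OF S(1) F that] .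
  have "(\<chi> i. pd i (\<lambda>z. e * F z + c \<bullet> z) y) = e *\<^sub>R (\<chi> i. pd i F y) + c"
    "(\<chi> i j. pd i (pd j (\<lambda>z. e * F z + c \<bullet> z)) y) = e *\<^sub>R (\<chi> i j. pd i (pd j F) y)"
    "(\<lambda>i j k. pd i (pd j (pd k (\<lambda>z. e * F z + c \<bullet> z))) y) = (\<lambda>i j k. e * pd i (pd j (pd k F)) y)"
    by (simp_all add: vec_eq_iff pd_beta_change[OF S F] pd_pd_beta_change[OF S F]
        pd_pd_pd_beta_change[OF S F])
  with jet_tensors_pd[OF S(1) sL S(2)]
  have jet_sL: "jet_tensors (\<lambda>z. e * F z + c \<bullet> z) y (e *\<^sub>R (\<chi> i. pd i F y) + c)
      (e *\<^sub>R (\<chi> i j. pd i (pd j F) y)) (\<lambda>i j k. e * pd i (pd j (pd k F)) y)"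
    by simp
  show ?thesis
  proof (unfold_locales)
    show "(\<chi> i. pd i F y) \<bullet> y = F y"
      using euler_identities(1)[OF F hom y] by (simp add: inner_vec_def mult.commute)
    show "(\<chi> i j. pd i (pd j F) y) *v y = 0"
      using euler_identities(2)[OF F hom y] S(2)
      by (simp add: vec_eq_iff matrix_vector_mult_def hessian_sym mult.commute)
    show "pd i (pd j (pd k F)) y = pd j (pd i (pd k F)) y" for i j k
      by (rule smooth_on_pd_commute[OF S(1) smooth_on_pd[OF F] S(2)])
    show "pd i (pd j (pd k F)) y = pd i (pd k (pd j F)) y" for i j k
      using S hessian_sym by (intro pd_cong) auto
  qed (use euler_identities(3)[OF F hom y] hessian_sym[OF S(2)] jet_tensors_pd[OF S(1) F S(2)] jet_sL
         pos inv in auto)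
qed

theorem lemma4:
  fixes U :: "(real^'n::finite) set"
    and L :: "real^'n \<Rightarrow> real^'n \<Rightarrow> real"
    and \<sigma> :: "real^'n \<Rightarrow> real"
    and b :: "real^'n \<Rightarrow> real^'n"
  assumes "open U"
    and "finsler_on U L"
    and "smooth_on U \<sigma>"
    and "\<forall>i. smooth_on U (\<lambda>x. b x $ i)"
    and "finsler_on U (\<lambda>x y. exp (\<sigma> x) * L x y + b x \<bullet> y)"
    and "x \<in> U" and "y \<noteq> 0"
  shows "let sL = (\<lambda>z. exp (\<sigma> x) * L x z + b x \<bullet> z);
             \<tau> = exp (\<sigma> x) * sL y / L x y
         in SS sL h i j k y =
              \<tau> * SS (L x) h i j k y
              - \<tau> / (2 * sL y) *
                 (hh (L x) i k y * HH (L x) (b x) sL j h y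
                  + hh (L x) j h y * HH (L x) (b x) sL i k y
                  - hh (L x) h k y * HH (L x) (b x) sL i j y
                  - hh (L x) i j y * HH (L x) (b x) sL h k y)"
proof -
  have "conformal_beta_jet (L x) (\<lambda>z. exp (\<sigma> x) * L x z + b x \<bullet> z) y (b x)
      (\<chi> i. pd i (L x) y) (\<chi> i j. pd i (pd j (L x)) y) (\<lambda>i j k. pd i (pd j (pd k (L x))) y)
      (exp (\<sigma> x))"
    using finsler_on_fibre[OF assms(2,6)] finsler_on_fibre[OF assms(5,6)] assms(7)
    by (intro conformal_beta_jet_pd) auto
  then show ?thesis
    unfolding Let_def by (rule conformal_beta_jet.SS_conformal_beta_change)
qed

end
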